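(* Let $n=1$ and let $\Omega\subset\mathbb{R}$ be a bounded interval with outward unit normal $\nu$. Assume that $\beta,\gamma$ are positive Hölder continuous functions on $\bar\Omega$, that $S_0,I_0$ are nonnegative continuous functions on $\bar\Omega$ with $I_0\not\equiv 0$ and $\int_\Omega(S_0+I_0)\,dx=N>0$, and let $d_S>0$. Let $r=\gamma/\beta$ and let $(S,I)$ be the nonnegative global solution of $$\partial_t S=d_S\Delta S-\beta SI+\gamma I \ (x\in\Omega,\ t>0),\quad \partial_t I=\beta SI-\gamma I\ (x\in\bar\Omega,\ t>0),\quad \partial_\nu S=0\ (x\in\partial\Omega,\ t>0),$$ $S(\cdot,0)=S_0$, $I(\cdot,0)=I_0$. Then $\|\nabla S(\cdot,t)\|_{L^2(\Omega)}\to0$ and $\int_\Omega\beta(S(x,t)-r(x))^2I(x,t)\,dx\to0$ as $t\to\infty$. *)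

theory Defs
  imports "HOL-Analysis.Analysis"
begin

definition hoelder_cont_on :: "real set \<Rightarrow> (real \<Rightarrow> real) \<Rightarrow> bool" where
  "hoelder_cont_on A f \<longleftrightarrow>
     (\<exists>\<alpha> C. 0 < \<alpha> \<and> \<alpha> \<le> 1 \<and> (\<forall>x\<in>A. \<forall>y\<in>A. \<bar>f x - f y\<bar> \<le> C * \<bar>x - y\<bar> powr \<alpha>))"

definition SIS_solution ::
  "real \<Rightarrow> real \<Rightarrow> real \<Rightarrow> (real \<Rightarrow> real) \<Rightarrow> (real \<Rightarrow> real) \<Rightarrow> (real \<Rightarrow> real) \<Rightarrow> (real \<Rightarrow> real)
   \<Rightarrow> (real \<Rightarrow> real \<Rightarrow> real) \<Rightarrow> (real \<Rightarrow> real \<Rightarrow> real) \<Rightarrow> bool" where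
  "SIS_solution a b dS \<beta> \<gamma> S0 I0 S I \<longleftrightarrow>
     continuous_on ({a..b} \<times> {0..}) (\<lambda>(x,t). S x t) \<and>
     continuous_on ({a..b} \<times> {0..}) (\<lambda>(x,t). I x t) \<and>
     (\<forall>x\<in>{a..b}. S x 0 = S0 x \<and> I x 0 = I0 x) \<and>
     (\<forall>x\<in>{a..b}. \<forall>t\<ge>0. S x t \<ge> 0 \<and> I x t \<ge> 0) \<and>
     (\<exists>Sx Sxx St.
        continuous_on ({a..b} \<times> {0<..}) (\<lambda>(x,t). Sx x t) \<and>
        continuous_on ({a..b} \<times> {0<..}) (\<lambda>(x,t). Sxx x t) \<and>
        continuous_on ({a<..<b} \<times> {0<..}) (\<lambda>(x,t). St x t) \<and>
        (\<forall>t>0. \<forall>x\<in>{a..b}.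
           ((\<lambda>y. S y t) has_real_derivative Sx x t) (at x within {a..b}) \<and>
           ((\<lambda>y. Sx y t) has_real_derivative Sxx x t) (at x within {a..b})) \<and>
        (\<forall>t>0. \<forall>x\<in>{a<..<b}.
           ((\<lambda>s. S x s) has_real_derivative St x t) (at t) \<and>
           St x t = dS * Sxx x t - \<beta> x * S x t * I x t + \<gamma> x * I x t) \<and>
        (\<forall>t>0. Sx a t = 0 \<and> Sx b t = 0)) \<and>
     (\<forall>t>0. \<forall>x\<in>{a..b}.
        ((\<lambda>s. I x s) has_real_derivative (\<beta> x * S x t * I x t - \<gamma> x * I x t)) (at t))"

end

theory Submission
  imports Defs
begin

(* Along the solution, the Lyapunov functional L(t) = integral of S^2/2 + r I, with r = gamma/beta,
   satisfies L' = -D for the dissipation D = dS * integral of S_x^2 + integral of beta (S - r)^2 I.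
   As L is nonnegative, D is integrable on [1, oo); to get D(t) -> 0 one shows that D cannot
   grow fast. By the maximum principle S stays below max (max S(.,1)) (max r) for t >= 1, so
   beta (S - r) <= C for a constant C, and then the upper right Dini derivative of D is at most
   C * D: the gradient part is handled by convexity and integration by parts, the rest by the
   mean value theorem in time. Hence D + C L is nonincreasing, and the mean value theorem on
   [t - 1, t] gives D(t) <= (1 + C) (L(t - 1) - L(t)), which tends to 0. *)

section \<open>Continuity and differentiability of functions of position and time\<close>

lemma hoelder_cont_on_imp_continuous_on:
  assumes "hoelder_cont_on A f"
  shows "continuous_on A f"
  unfolding continuous_on_def
proof
  obtain \<alpha> C where "0 < \<alpha>"
    and hoelder: "\<And>x y. x \<in> A \<Longrightarrow> y \<in> A \<Longrightarrow> \<bar>f x - f y\<bar> \<le> C * \<bar>x - y\<bar> powr \<alpha>"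
    using assms unfolding hoelder_cont_on_def by blast
  fix x assume "x \<in> A"
  have "((\<lambda>y. C * \<bar>y - x\<bar> powr \<alpha>) \<longlongrightarrow> C * 0) (at x within A)"
    by (intro tendsto_intros tendsto_zero_powrI[OF _ tendsto_const _ \<open>0 < \<alpha>\<close>])
       (auto intro!: tendsto_eq_intros)
  then have lim: "((\<lambda>y. C * \<bar>y - x\<bar> powr \<alpha>) \<longlongrightarrow> 0) (at x within A)" by simp
  have "\<forall>\<^sub>F y in at x within A. norm (f y - f x) \<le> C * \<bar>y - x\<bar> powr \<alpha>"
    unfolding eventually_at_filter
    using hoelder[OF _ \<open>x \<in> A\<close>] by (intro always_eventually) simp
  from Lim_null_comparison[OF this lim] have "((\<lambda>y. f y - f x) \<longlongrightarrow> 0) (at x within A)" .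
  then show "(f \<longlongrightarrow> f x) (at x within A)"
    by (simp only: LIM_zero_iff)
qed

lemma continuous_on_Times_slice:
  assumes "continuous_on (A \<times> T) (\<lambda>p. h (fst p) (snd p))" "t \<in> T"
  shows "continuous_on A (\<lambda>x. h x t)"
proof -
  have "(\<lambda>x. (x, t)) ` A \<subseteq> A \<times> T" using assms(2) by auto
  from continuous_on_compose2[OF assms(1) _ this] show ?thesis
    by (simp add: continuous_on_Pair)
qed

lemma continuous_on_Times_swap:
  assumes "continuous_on (A \<times> T) (\<lambda>p. h (fst p) (snd p))"
  shows "continuous_on (T \<times> A) (\<lambda>(t, x). h x t)"
proof -
  have "prod.swap ` (T \<times> A) \<subseteq> A \<times> T" by auto
  from continuous_on_compose2[OF assms continuous_on_swap this] show ?thesis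
    by (simp add: case_prod_beta)
qed

lemma continuous_on_Times_fst:
  assumes "continuous_on A f"
  shows "continuous_on (A \<times> T) (\<lambda>p. f (fst p))"
  by (rule continuous_on_compose2[OF assms continuous_on_fst]) auto

lemma difference_quotient_eq_deriv_between:
  fixes g :: "real \<Rightarrow> real"
  assumes "s \<noteq> t" and deriv: "\<And>\<sigma>. min s t \<le> \<sigma> \<Longrightarrow> \<sigma> \<le> max s t \<Longrightarrow> (g has_real_derivative g' \<sigma>) (at \<sigma>)"
  obtains \<xi> where "\<bar>\<xi> - t\<bar> < \<bar>s - t\<bar>" "(g s - g t) / (s - t) = g' \<xi>"
proof (cases "s < t")
  case True
  with MVT2[of s t g g'] deriv obtain \<xi> where "s < \<xi>" "\<xi> < t" "g t - g s = (t - s) * g' \<xi>" by auto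
  with that[of \<xi>] show ?thesis by (simp add: field_simps)
next
  case False
  with \<open>s \<noteq> t\<close> have "t < s" by simp
  with MVT2[of t s g g'] deriv obtain \<xi> where "t < \<xi>" "\<xi> < s" "g s - g t = (s - t) * g' \<xi>" by auto
  with that[of \<xi>] show ?thesis by (simp add: field_simps)
qed

lemma slice_difference_quotients_near:
  fixes f F :: "'a::metric_space \<Rightarrow> real \<Rightarrow> real"
  assumes F_cont: "continuous_on (A \<times> T) (\<lambda>p. F (fst p) (snd p))"
    and "open T"
    and deriv: "\<And>y s. y \<in> A0 \<Longrightarrow> s \<in> T \<Longrightarrow> ((\<lambda>s. f y s) has_real_derivative F y s) (at s)"
    and "A0 \<subseteq> A" "x \<in> A" "t \<in> T" "0 < e"
  obtains d where "0 < d" "ball t d \<subseteq> T"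
    "\<And>y s. y \<in> A0 \<Longrightarrow> dist y x < d \<Longrightarrow> s \<noteq> t \<Longrightarrow> dist s t < d \<Longrightarrow>
      \<bar>(f y s - f y t) / (s - t) - F x t\<bar> < e"
proof -
  obtain d0 where "0 < d0" and d0: "\<And>p. p \<in> A \<times> T \<Longrightarrow> dist p (x, t) < d0 \<Longrightarrow>
      dist (F (fst p) (snd p)) (F x t) < e"
    using F_cont \<open>x \<in> A\<close> \<open>t \<in> T\<close> \<open>0 < e\<close> unfolding continuous_on_iff
    by (metis SigmaI fst_conv snd_conv)
  obtain d1 where "0 < d1" and d1: "ball t d1 \<subseteq> T"
    using \<open>open T\<close> \<open>t \<in> T\<close> openE by blast
  define d where "d = min (d0 / 2) d1"
  show ?thesis
  proof (rule that)
    show "0 < d" "ball t d \<subseteq> T" using \<open>0 < d0\<close> \<open>0 < d1\<close> d1 by (auto simp: d_def)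
    fix y s assume y: "y \<in> A0" "dist y x < d" and "s \<noteq> t" "dist s t < d"
    have between_T: "\<sigma> \<in> T" if "\<bar>\<sigma> - t\<bar> \<le> \<bar>s - t\<bar>" for \<sigma>
      using d1 that \<open>dist s t < d\<close> by (force simp: d_def dist_real_def)
    have "((\<lambda>s. f y s) has_real_derivative F y \<sigma>) (at \<sigma>)" if "min s t \<le> \<sigma>" "\<sigma> \<le> max s t" for \<sigma>
      using that by (intro deriv y(1) between_T) linarith
    then obtain \<xi> where \<xi>: "\<bar>\<xi> - t\<bar> < \<bar>s - t\<bar>" and q: "(f y s - f y t) / (s - t) = F y \<xi>"
      using difference_quotient_eq_deriv_between[OF \<open>s \<noteq> t\<close>] by blast
    have "dist (y, \<xi>) (x, t) \<le> dist y x + \<bar>\<xi> - t\<bar>"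
      unfolding dist_Pair_Pair dist_real_def by (rule sqrt_sum_squares_le_sum) auto
    also have "\<dots> < d0" using y \<xi> \<open>dist s t < d\<close> by (simp add: d_def dist_real_def)
    finally have "dist (F y \<xi>) (F x t) < e"
      using d0[of "(y, \<xi>)"] y(1) \<open>A0 \<subseteq> A\<close> between_T \<xi> by auto
    then show "\<bar>(f y s - f y t) / (s - t) - F x t\<bar> < e" using q by (simp add: dist_real_def)
  qed
qed

lemma slice_has_real_derivative_closure:
  fixes f F :: "'a::metric_space \<Rightarrow> real \<Rightarrow> real"
  assumes f_cont: "continuous_on (A \<times> T) (\<lambda>p. f (fst p) (snd p))"
    and F_cont: "continuous_on (A \<times> T) (\<lambda>p. F (fst p) (snd p))"
    and "open T"
    and deriv: "\<And>y s. y \<in> A0 \<Longrightarrow> s \<in> T \<Longrightarrow> ((\<lambda>s. f y s) has_real_derivative F y s) (at s)"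
    and "A0 \<subseteq> A" "x \<in> A" "x islimpt A0" "t \<in> T"
  shows "((\<lambda>s. f x s) has_real_derivative F x t) (at t)"
  unfolding has_field_derivative_iff tendsto_iff
proof (intro allI impI)
  fix e :: real assume "0 < e"
  then obtain d where "0 < d" "ball t d \<subseteq> T" and near:
    "\<And>y s. y \<in> A0 \<Longrightarrow> dist y x < d \<Longrightarrow> s \<noteq> t \<Longrightarrow> dist s t < d \<Longrightarrow>
      \<bar>(f y s - f y t) / (s - t) - F x t\<bar> < e / 2"
    using slice_difference_quotients_near[OF F_cont \<open>open T\<close> deriv \<open>A0 \<subseteq> A\<close> \<open>x \<in> A\<close> \<open>t \<in> T\<close>, of "e / 2"]
    by (metis half_gt_zero)
  have "dist ((f x s - f x t) / (s - t)) (F x t) < e" if "s \<noteq> t" "dist s t < d" for s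
  proof -
    let ?q = "\<lambda>y. \<bar>(f y s - f y t) / (s - t) - F x t\<bar>"
    have "s \<in> T" using \<open>ball t d \<subseteq> T\<close> that by (auto simp: dist_commute)
    then have "continuous_on A (\<lambda>y. f y s)" "continuous_on A (\<lambda>y. f y t)"
      using \<open>t \<in> T\<close> by (auto intro: continuous_on_Times_slice[OF f_cont])
    then have "continuous_on A ?q"
      by (intro continuous_on_divide continuous_intros) (use that in auto)
    then have "(?q \<longlongrightarrow> ?q x) (at x within A0)"
      using \<open>x \<in> A\<close> \<open>A0 \<subseteq> A\<close> by (auto simp: continuous_on_def intro: tendsto_within_subset)
    moreover have "\<forall>\<^sub>F y in at x within A0. ?q y \<le> e / 2"
      using \<open>0 < d\<close> near[OF _ _ that] unfolding eventually_at by (intro exI[of _ d]) (auto intro: less_imp_le)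
    moreover have "at x within A0 \<noteq> bot" using \<open>x islimpt A0\<close> by (simp add: trivial_limit_within)
    ultimately have "?q x \<le> e / 2" by (intro tendsto_upperbound)
    then show ?thesis using \<open>0 < e\<close> by (simp add: dist_real_def)
  qed
  then show "\<forall>\<^sub>F s in at t. dist ((f x s - f x t) / (s - t)) (F x t) < e"
    unfolding eventually_at using \<open>0 < d\<close> by blast
qed

lemma uniformly_close_in_time:
  fixes f :: "'a::metric_space \<Rightarrow> real \<Rightarrow> real"
  assumes cont: "continuous_on (A \<times> {t..u}) (\<lambda>p. f (fst p) (snd p))"
    and "compact A" "t < u" "0 < \<eta>"
  obtains \<delta> where "0 < \<delta>" "\<delta> \<le> u - t" "\<And>x s. x \<in> A \<Longrightarrow> s \<in> {t..t + \<delta>} \<Longrightarrow> \<bar>f x s - f x t\<bar> < \<eta>"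
proof -
  have "compact (A \<times> {t..u})" using \<open>compact A\<close> by (intro compact_Times compact_Icc)
  from compact_uniformly_continuous[OF cont this] \<open>0 < \<eta>\<close> obtain d where "0 < d"
    and d: "\<And>p p'. p \<in> A \<times> {t..u} \<Longrightarrow> p' \<in> A \<times> {t..u} \<Longrightarrow> dist p' p < d \<Longrightarrow>
      dist (f (fst p') (snd p')) (f (fst p) (snd p)) < \<eta>"
    unfolding uniformly_continuous_on_def by metis
  define \<delta> where "\<delta> = min (d / 2) (u - t)"
  show ?thesis
  proof (rule that)
    show "0 < \<delta>" "\<delta> \<le> u - t" using \<open>0 < d\<close> \<open>t < u\<close> by (auto simp: \<delta>_def)
    fix x s assume "x \<in> A" "s \<in> {t..t + \<delta>}"
    moreover have "dist (x, s) (x, t) = \<bar>s - t\<bar>" by (simp add: dist_Pair_Pair dist_real_def)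
    ultimately show "\<bar>f x s - f x t\<bar> < \<eta>"
      using d[of "(x, t)" "(x, s)"] \<open>0 < d\<close> \<open>t < u\<close> by (auto simp: \<delta>_def dist_real_def)
  qed
qed

lemma first_time_above:
  fixes u :: "'a::metric_space \<Rightarrow> real \<Rightarrow> real" and c :: "real \<Rightarrow> real"
  assumes "compact A" and u_cont: "continuous_on (A \<times> {t0..t1}) (\<lambda>p. u (fst p) (snd p))"
    and c_cont: "continuous_on {t0..t1} c" and "x1 \<in> A" "t0 \<le> t1" "c t1 \<le> u x1 t1"
  obtains \<tau> x\<tau> where "t0 \<le> \<tau>" "\<tau> \<le> t1" "x\<tau> \<in> A" "c \<tau> \<le> u x\<tau> \<tau>"
    "\<And>y s. y \<in> A \<Longrightarrow> t0 \<le> s \<Longrightarrow> s < \<tau> \<Longrightarrow> u y s < c s"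
proof -
  define P where "P = {p \<in> A \<times> {t0..t1}. c (snd p) \<le> u (fst p) (snd p)}"
  have "compact (A \<times> {t0..t1})" using \<open>compact A\<close> by (intro compact_Times compact_Icc)
  moreover have "closed P" unfolding P_def
    using \<open>compact (A \<times> {t0..t1})\<close> u_cont
    by (intro continuous_on_closed_Collect_le compact_imp_closed continuous_on_compose2[OF c_cont]
        continuous_intros) auto
  ultimately have "compact (snd ` P)"
    using compact_Int_closed[of "A \<times> {t0..t1}" P]
    by (intro compact_continuous_image continuous_intros) (simp add: P_def Int_absorb1 subset_iff)
  moreover have "(x1, t1) \<in> P" using assms by (auto simp: P_def)
  ultimately obtain \<tau> where "\<tau> \<in> snd ` P" and \<tau>_min: "\<forall>s \<in> snd ` P. \<tau> \<le> s"
    using compact_attains_inf by blast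
  then obtain x\<tau> where "(x\<tau>, \<tau>) \<in> P" by force
  show ?thesis
  proof (rule that)
    show "t0 \<le> \<tau>" "\<tau> \<le> t1" "x\<tau> \<in> A" "c \<tau> \<le> u x\<tau> \<tau>" using \<open>(x\<tau>, \<tau>) \<in> P\<close> by (auto simp: P_def)
    fix y s assume "y \<in> A" "t0 \<le> s" "s < \<tau>"
    with \<open>\<tau> \<le> t1\<close> \<tau>_min have "(y, s) \<notin> P" by force
    with \<open>y \<in> A\<close> \<open>t0 \<le> s\<close> \<open>s < \<tau>\<close> \<open>\<tau> \<le> t1\<close> show "u y s < c s" by (auto simp: P_def)
  qed
qed

section \<open>Calculus on an interval with Neumann boundary conditions\<close>

lemma mvt_within_Icc:
  fixes f f' :: "real \<Rightarrow> real"
  assumes "a \<le> y1" "y1 < y2" "y2 \<le> b"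
    and f_deriv: "\<And>y. y \<in> {a..b} \<Longrightarrow> (f has_real_derivative f' y) (at y within {a..b})"
  shows "\<exists>\<xi>\<in>{y1<..<y2}. f y2 - f y1 = f' \<xi> * (y2 - y1)"
proof (rule mvt_simple[OF \<open>y1 < y2\<close>, of f "\<lambda>\<xi>. (*) (f' \<xi>)"])
  fix \<xi> assume "y1 \<le> \<xi>" "\<xi> \<le> y2"
  with assms have "(f has_real_derivative f' \<xi>) (at \<xi> within {y1..y2})"
    by (intro DERIV_subset[OF f_deriv]) auto
  then show "(f has_derivative (*) (f' \<xi>)) (at \<xi> within {y1..y2})"
    by (simp add: has_field_derivative_def)
qed

lemma deriv_zero_at_max_Neumann:
  fixes f f' :: "real \<Rightarrow> real"
  assumes x: "x \<in> {a..b}"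
    and f_deriv: "(f has_real_derivative f' x) (at x within {a..b})"
    and Neumann: "f' a = 0" "f' b = 0"
    and max: "\<And>y. y \<in> {a..b} \<Longrightarrow> f y \<le> f x"
  shows "f' x = 0"
proof -
  consider "x = a" | "x = b" | "a < x" "x < b" using x by fastforce
  then show ?thesis
  proof cases
    case 3
    then have "(f has_real_derivative f' x) (at x)"
      using f_deriv at_within_Icc_at[of a x b] by simp
    then show ?thesis
      by (rule DERIV_local_max[of _ _ _ "min (x - a) (b - x)"]) (use 3 max in \<open>auto simp: abs_less_iff\<close>)
  qed (use Neumann in auto)
qed

lemma second_deriv_nonpos_at_max_Neumann:
  fixes f f' :: "real \<Rightarrow> real"
  assumes "a < b" and x: "x \<in> {a..b}"
    and f_deriv: "\<And>y. y \<in> {a..b} \<Longrightarrow> (f has_real_derivative f' y) (at y within {a..b})"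
    and f'_deriv: "(f' has_real_derivative f'') (at x within {a..b})"
    and Neumann: "f' a = 0" "f' b = 0"
    and max: "\<And>y. y \<in> {a..b} \<Longrightarrow> f y \<le> f x"
  shows "f'' \<le> 0"
proof (rule ccontr)
  assume "\<not> f'' \<le> 0"
  have "f' x = 0" by (rule deriv_zero_at_max_Neumann[OF x f_deriv[OF x] Neumann max])
  then have "((\<lambda>y. f' y / (y - x)) \<longlongrightarrow> f'') (at x within {a..b})"
    using f'_deriv by (simp add: has_field_derivative_iff)
  from order_tendstoD(1)[OF this, of 0] \<open>\<not> f'' \<le> 0\<close> obtain d where "0 < d"
    and d: "\<And>y. y \<in> {a..b} \<Longrightarrow> y \<noteq> x \<Longrightarrow> dist y x < d \<Longrightarrow> 0 < f' y / (y - x)"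
    unfolding eventually_at by auto
  show False
  proof (cases "x < b")
    case True
    define y where "y = min (x + d / 2) b"
    have y: "x < y" "y \<le> b" using True \<open>0 < d\<close> by (auto simp: y_def)
    obtain \<xi> where \<xi>: "\<xi> \<in> {x<..<y}" and eq: "f y - f x = f' \<xi> * (y - x)"
      using mvt_within_Icc[OF _ _ _ f_deriv, of x y] x y by auto
    have "0 < f' \<xi> / (\<xi> - x)" using \<xi> x y by (intro d) (auto simp: y_def dist_real_def)
    then have "0 < f' \<xi> * (y - x)" using \<xi> y by (simp add: zero_less_divide_iff)
    then show False using eq max[of y] x y by auto
  next
    case False
    define y where "y = max (x - d / 2) a"
    have y: "y < x" "a \<le> y" using False x \<open>a < b\<close> \<open>0 < d\<close> by (auto simp: y_def)
    obtain \<xi> where \<xi>: "\<xi> \<in> {y<..<x}" and eq: "f x - f y = f' \<xi> * (x - y)"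
      using mvt_within_Icc[OF _ _ _ f_deriv, of y x] x y by auto
    have "0 < f' \<xi> / (\<xi> - x)" using \<xi> x y by (intro d) (auto simp: y_def dist_real_def)
    then have "f' \<xi> * (x - y) < 0" using \<xi> y by (simp add: zero_less_divide_iff mult_neg_pos)
    then show False using eq max[of y] x y by auto
  qed
qed

lemma integral_by_parts_vanishing_boundary:
  fixes p u :: "real \<Rightarrow> real"
  assumes "a \<le> b" and "p a = 0" "p b = 0"
    and p_deriv: "\<And>x. x \<in> {a..b} \<Longrightarrow> (p has_real_derivative p' x) (at x within {a..b})"
    and u_deriv: "\<And>x. x \<in> {a..b} \<Longrightarrow> (u has_real_derivative u' x) (at x within {a..b})"
    and cont: "continuous_on {a..b} p" "continuous_on {a..b} p'"
      "continuous_on {a..b} u" "continuous_on {a..b} u'"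
  shows "integral {a..b} (\<lambda>x. p x * u' x) = - integral {a..b} (\<lambda>x. p' x * u x)"
proof -
  have "((\<lambda>x. p x * u' x + p' x * u x) has_integral (p b * u b - p a * u a)) {a..b}"
  proof (rule fundamental_theorem_of_calculus[OF \<open>a \<le> b\<close>])
    fix x assume "x \<in> {a..b}"
    from DERIV_mult'[OF p_deriv[OF this] u_deriv[OF this]]
    show "((\<lambda>x. p x * u x) has_vector_derivative p x * u' x + p' x * u x) (at x within {a..b})"
      by (simp add: has_real_derivative_iff_has_vector_derivative algebra_simps)
  qed
  then have "integral {a..b} (\<lambda>x. p x * u' x + p' x * u x) = 0"
    using \<open>p a = 0\<close> \<open>p b = 0\<close> by (simp add: integral_unique)
  moreover have "integral {a..b} (\<lambda>x. p x * u' x + p' x * u x) =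
      integral {a..b} (\<lambda>x. p x * u' x) + integral {a..b} (\<lambda>x. p' x * u x)"
    by (intro integral_add integrable_continuous_real continuous_intros cont)
  ultimately show ?thesis by simp
qed

section \<open>Dini derivatives and decay of a dissipation\<close>

lemma has_real_derivative_right_increment_bound:
  assumes "(f has_real_derivative l) (at t)" and "0 < e"
  shows "\<exists>\<delta>>0. \<forall>h. 0 < h \<and> h < \<delta> \<longrightarrow> f (t + h) \<le> f t + h * (l + e)"
proof -
  have "((\<lambda>y. (f y - f t) / (y - t)) \<longlongrightarrow> l) (at t)"
    using assms(1) by (simp add: has_field_derivative_iff)
  from order_tendstoD(2)[OF this, of "l + e"] obtain \<delta> where "0 < \<delta>"
    and \<delta>: "\<And>y. y \<noteq> t \<Longrightarrow> dist y t < \<delta> \<Longrightarrow> (f y - f t) / (y - t) < l + e"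
    using \<open>0 < e\<close> unfolding eventually_at by auto
  show ?thesis
  proof (intro exI[of _ \<delta>] conjI allI impI \<open>0 < \<delta>\<close>)
    fix h :: real assume h: "0 < h \<and> h < \<delta>"
    then have "(f (t + h) - f t) / h < l + e" using \<delta>[of "t + h"] by (simp add: dist_real_def)
    then show "f (t + h) \<le> f t + h * (l + e)" using h by (simp add: pos_divide_less_eq algebra_simps)
  qed
qed

lemma le_of_right_increment_bound:
  fixes g :: "real \<Rightarrow> real"
  assumes cont: "continuous_on {s..u} g" and "s \<le> u"
    and incr: "\<And>t. s \<le> t \<Longrightarrow> t < u \<Longrightarrow> \<exists>\<delta>>0. \<forall>h. 0 < h \<and> h < \<delta> \<longrightarrow> g (t + h) \<le> g t + e * h"
  shows "g u \<le> g s + e * (u - s)"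
proof -
  define P where "P = {\<tau> \<in> {s..u}. g \<tau> \<le> g s + e * (\<tau> - s)}"
  have "closed P" unfolding P_def
    by (intro continuous_on_closed_Collect_le[OF cont] continuous_intros closed_atLeastAtMost)
  moreover have "bdd_above P" "s \<in> P" using \<open>s \<le> u\<close> by (auto simp: P_def intro: bdd_aboveI[of _ u])
  ultimately have "Sup P \<in> P" using closed_contains_Sup by blast
  define \<tau> where "\<tau> = Sup P"
  have \<tau>: "s \<le> \<tau>" "\<tau> \<le> u" "g \<tau> \<le> g s + e * (\<tau> - s)"
    using \<open>Sup P \<in> P\<close> by (auto simp: P_def \<tau>_def)
  show ?thesis
  proof (cases "\<tau> = u")
    case False
    then have "\<tau> < u" using \<tau> by simp
    then obtain \<delta> where "0 < \<delta>" and \<delta>: "\<forall>h. 0 < h \<and> h < \<delta> \<longrightarrow> g (\<tau> + h) \<le> g \<tau> + e * h"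
      using incr \<tau> by blast
    define h where "h = min (\<delta> / 2) (u - \<tau>)"
    have h: "0 < h" "h < \<delta>" "\<tau> + h \<le> u" using \<open>0 < \<delta>\<close> \<open>\<tau> < u\<close> by (auto simp: h_def)
    then have "g (\<tau> + h) \<le> g s + e * (\<tau> + h - s)" using \<delta> \<tau>(3) by (fastforce simp: algebra_simps)
    then have "\<tau> + h \<in> P" using h \<tau> by (auto simp: P_def)
    then have "\<tau> + h \<le> \<tau>" unfolding \<tau>_def by (rule cSup_upper[OF _ \<open>bdd_above P\<close>])
    then show ?thesis using h by simp
  qed (use \<tau> in simp)
qed

lemma antimono_of_right_increment_bounds:
  fixes g :: "real \<Rightarrow> real"
  assumes cont: "continuous_on {s..u} g" and "s \<le> u"
    and incr: "\<And>t e. s \<le> t \<Longrightarrow> t < u \<Longrightarrow> 0 < e \<Longrightarrow>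
      \<exists>\<delta>>0. \<forall>h. 0 < h \<and> h < \<delta> \<longrightarrow> g (t + h) \<le> g t + e * h"
  shows "g u \<le> g s"
proof (rule field_le_epsilon)
  fix e :: real assume "0 < e"
  define e' where "e' = e / (u - s + 1)"
  have "0 < e'" "e' * (u - s) \<le> e"
    using \<open>0 < e\<close> \<open>s \<le> u\<close> by (auto simp: e'_def field_simps)
  moreover have "g u \<le> g s + e' * (u - s)"
    by (rule le_of_right_increment_bound[OF cont \<open>s \<le> u\<close> incr]) (use \<open>0 < e'\<close> in auto)
  ultimately show "g u \<le> g s + e" by linarith
qed

lemma antimono_dissipation_plus_energy:
  fixes L D :: "real \<Rightarrow> real"
  assumes L_deriv: "\<And>t. t0 \<le> t \<Longrightarrow> (L has_real_derivative - D t) (at t)"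
    and D_cont: "continuous_on {t0..} D"
    and D_incr: "\<And>t e. t0 \<le> t \<Longrightarrow> 0 < e \<Longrightarrow>
      \<exists>\<delta>>0. \<forall>h. 0 < h \<and> h < \<delta> \<longrightarrow> D (t + h) \<le> D t + h * (C * D t + e)"
    and "0 \<le> C" "t0 \<le> s" "s \<le> u"
  shows "D u + C * L u \<le> D s + C * L s"
proof (rule antimono_of_right_increment_bounds[OF _ \<open>s \<le> u\<close>])
  have "continuous_on {s..u} L"
    using L_deriv \<open>t0 \<le> s\<close> by (intro has_real_derivative_imp_continuous_on[of _ L "\<lambda>t. - D t"]) auto
  moreover have "continuous_on {s..u} D"
    using \<open>t0 \<le> s\<close> by (intro continuous_on_subset[OF D_cont]) auto
  ultimately show "continuous_on {s..u} (\<lambda>t. D t + C * L t)" by (intro continuous_intros)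
next
  fix t e :: real assume "s \<le> t" "0 < e"
  then have "t0 \<le> t" using \<open>t0 \<le> s\<close> by simp
  define e' where "e' = e / (2 * (C + 1))"
  have "0 < e'" "C * e' \<le> e / 2" using \<open>0 < e\<close> \<open>0 \<le> C\<close> by (auto simp: e'_def field_simps)
  obtain \<delta>1 where "0 < \<delta>1" and \<delta>1: "\<forall>h. 0 < h \<and> h < \<delta>1 \<longrightarrow> D (t + h) \<le> D t + h * (C * D t + e / 2)"
    using D_incr[OF \<open>t0 \<le> t\<close>, of "e / 2"] \<open>0 < e\<close> by auto
  obtain \<delta>2 where "0 < \<delta>2" and \<delta>2: "\<forall>h. 0 < h \<and> h < \<delta>2 \<longrightarrow> L (t + h) \<le> L t + h * (- D t + e')"
    using has_real_derivative_right_increment_bound[OF L_deriv[OF \<open>t0 \<le> t\<close>] \<open>0 < e'\<close>] by auto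
  show "\<exists>\<delta>>0. \<forall>h. 0 < h \<and> h < \<delta> \<longrightarrow> D (t + h) + C * L (t + h) \<le> D t + C * L t + e * h"
  proof (intro exI[of _ "min \<delta>1 \<delta>2"] conjI allI impI)
    fix h assume h: "0 < h \<and> h < min \<delta>1 \<delta>2"
    have "D (t + h) \<le> D t + h * (C * D t + e / 2)" using \<delta>1 h by auto
    moreover have "h * (C * D t + e / 2) = h * (C * D t) + h * (e / 2)" by (simp add: algebra_simps)
    moreover have "C * L (t + h) \<le> C * (L t + h * (- D t + e'))"
      using \<delta>2 h \<open>0 \<le> C\<close> by (intro mult_left_mono) auto
    moreover have "C * (L t + h * (- D t + e')) = C * L t - h * (C * D t) + h * (C * e')"
      by (simp add: algebra_simps)
    moreover have "h * (C * e') \<le> h * (e / 2)" using \<open>C * e' \<le> e / 2\<close> h by simp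
    moreover have "e * h = h * (e / 2) + h * (e / 2)" by (simp add: algebra_simps)
    ultimately show "D (t + h) + C * L (t + h) \<le> D t + C * L t + e * h" by linarith
  qed (use \<open>0 < \<delta>1\<close> \<open>0 < \<delta>2\<close> in simp)
qed

lemma antimono_drop_tendsto_zero:
  fixes L :: "real \<Rightarrow> real"
  assumes antimono: "\<And>s u. t0 \<le> s \<Longrightarrow> s \<le> u \<Longrightarrow> L u \<le> L s"
    and bdd: "\<And>t. t0 \<le> t \<Longrightarrow> m \<le> L t"
  shows "((\<lambda>t. L (t - 1) - L t) \<longlongrightarrow> 0) at_top"
proof (rule tendstoI)
  fix \<epsilon> :: real assume "0 < \<epsilon>"
  define l where "l = Inf (L ` {t0..})"
  have "bdd_below (L ` {t0..})" using bdd by (intro bdd_belowI[of _ m]) auto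
  then have l_le: "l \<le> L t" if "t0 \<le> t" for t
    unfolding l_def using that by (simp add: cInf_lower)
  obtain T where T: "t0 \<le> T" "L T < l + \<epsilon>"
    using cInf_lessD[of "L ` {t0..}" "l + \<epsilon>"] \<open>0 < \<epsilon>\<close> by (auto simp: l_def)
  have "dist (L (t - 1) - L t) 0 < \<epsilon>" if "T + 1 \<le> t" for t
    using antimono[of T "t - 1"] antimono[of "t - 1" t] l_le[of t] T that
    by (simp add: dist_real_def)
  then show "\<forall>\<^sub>F t in at_top. dist (L (t - 1) - L t) 0 < \<epsilon>"
    unfolding eventually_at_top_linorder by blast
qed

lemma Lyapunov_dissipation_tendsto_zero:
  fixes L D :: "real \<Rightarrow> real"
  assumes L_deriv: "\<And>t. t0 \<le> t \<Longrightarrow> (L has_real_derivative - D t) (at t)"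
    and L_bdd: "\<And>t. t0 \<le> t \<Longrightarrow> m \<le> L t"
    and D_nonneg: "\<And>t. t0 \<le> t \<Longrightarrow> 0 \<le> D t"
    and D_cont: "continuous_on {t0..} D"
    and D_incr: "\<And>t e. t0 \<le> t \<Longrightarrow> 0 < e \<Longrightarrow>
      \<exists>\<delta>>0. \<forall>h. 0 < h \<and> h < \<delta> \<longrightarrow> D (t + h) \<le> D t + h * (C * D t + e)"
    and "0 \<le> C"
  shows "(D \<longlongrightarrow> 0) at_top"
proof -
  have L_antimono: "L u \<le> L s" if "t0 \<le> s" "s \<le> u" for s u
    by (rule deriv_nonpos_imp_antimono[OF L_deriv]) (use that D_nonneg in auto)
  have drop_tendsto: "((\<lambda>t. L (t - 1) - L t) \<longlongrightarrow> 0) at_top"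
    using antimono_drop_tendsto_zero[OF L_antimono L_bdd] .
  have D_le_drop: "D t \<le> (1 + C) * (L (t - 1) - L t)" if "t0 + 1 \<le> t" for t
  proof -
    have "\<exists>z>t - 1. z < t \<and> L t - L (t - 1) = (t - (t - 1)) * (- D z)"
      by (rule MVT2) (use L_deriv that in auto)
    then obtain z where z: "t - 1 < z" "z < t" and "L t - L (t - 1) = (t - (t - 1)) * (- D z)"
      by blast
    then have "D z = L (t - 1) - L t" by simp
    moreover have "D t + C * L t \<le> D z + C * L z"
      using z that by (intro antimono_dissipation_plus_energy[OF L_deriv D_cont D_incr \<open>0 \<le> C\<close>]) auto
    moreover have "C * L z \<le> C * L (t - 1)"
      using z that \<open>0 \<le> C\<close> L_antimono[of "t - 1" z] by (simp add: mult_left_mono)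
    ultimately show ?thesis by (simp add: algebra_simps)
  qed
  show ?thesis
  proof (rule tendsto_sandwich[of "\<lambda>_. 0" _ _ "\<lambda>t. (1 + C) * (L (t - 1) - L t)"])
    show "\<forall>\<^sub>F t in at_top. 0 \<le> D t"
      using eventually_ge_at_top[of t0] by eventually_elim (rule D_nonneg)
    show "\<forall>\<^sub>F t in at_top. D t \<le> (1 + C) * (L (t - 1) - L t)"
      using eventually_ge_at_top[of "t0 + 1"] by eventually_elim (rule D_le_drop)
    show "((\<lambda>t. (1 + C) * (L (t - 1) - L t)) \<longlongrightarrow> 0) at_top"
      using tendsto_mult_left[OF drop_tendsto, of "1 + C"] by simp
  qed simp
qed

section \<open>The SIS system\<close>

lemma neg_mult_le_of_near:
  fixes p q c :: real
  assumes "\<bar>p - c\<bar> \<le> \<eta>" "\<bar>q - c\<bar> \<le> \<eta>" "\<bar>p\<bar> \<le> M" "\<bar>c\<bar> \<le> M"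
  shows "- (p * q) \<le> 2 * M * \<eta>"
proof -
  have "\<bar>p * (q - c)\<bar> \<le> M * \<eta>" "\<bar>c * (p - c)\<bar> \<le> M * \<eta>"
    unfolding abs_mult using assms by (auto intro: mult_mono)
  moreover have "- (p * q) = - (c * c) - p * (q - c) - c * (p - c)" by (simp add: algebra_simps)
  moreover have "0 \<le> c * c" by simp
  ultimately show ?thesis
    using abs_ge_minus_self[of "p * (q - c)"] abs_ge_minus_self[of "c * (p - c)"] by linarith
qed

locale sis_system =
  fixes a b dS :: real and \<beta> \<gamma> :: "real \<Rightarrow> real" and S I Sx Sxx :: "real \<Rightarrow> real \<Rightarrow> real"
  assumes a_less_b: "a < b" and dS_pos: "0 < dS"
    and \<beta>_cont: "continuous_on {a..b} \<beta>" and \<gamma>_cont: "continuous_on {a..b} \<gamma>"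
    and \<beta>_pos: "\<And>x. x \<in> {a..b} \<Longrightarrow> 0 < \<beta> x" and \<gamma>_pos: "\<And>x. x \<in> {a..b} \<Longrightarrow> 0 < \<gamma> x"
    and S_cont: "continuous_on ({a..b} \<times> {0<..}) (\<lambda>p. S (fst p) (snd p))"
    and I_cont: "continuous_on ({a..b} \<times> {0<..}) (\<lambda>p. I (fst p) (snd p))"
    and Sx_cont: "continuous_on ({a..b} \<times> {0<..}) (\<lambda>p. Sx (fst p) (snd p))"
    and Sxx_cont: "continuous_on ({a..b} \<times> {0<..}) (\<lambda>p. Sxx (fst p) (snd p))"
    and I_nonneg: "\<And>x t. x \<in> {a..b} \<Longrightarrow> 0 < t \<Longrightarrow> 0 \<le> I x t"
    and S_x_deriv: "\<And>x t. 0 < t \<Longrightarrow> x \<in> {a..b} \<Longrightarrow>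
      ((\<lambda>y. S y t) has_real_derivative Sx x t) (at x within {a..b})"
    and Sx_x_deriv: "\<And>x t. 0 < t \<Longrightarrow> x \<in> {a..b} \<Longrightarrow>
      ((\<lambda>y. Sx y t) has_real_derivative Sxx x t) (at x within {a..b})"
    and S_t_deriv_interior: "\<And>x t. 0 < t \<Longrightarrow> x \<in> {a<..<b} \<Longrightarrow>
      ((\<lambda>s. S x s) has_real_derivative (dS * Sxx x t - \<beta> x * S x t * I x t + \<gamma> x * I x t)) (at t)"
    and Neumann: "\<And>t. 0 < t \<Longrightarrow> Sx a t = 0 \<and> Sx b t = 0"
    and I_t_deriv_rhs: "\<And>x t. 0 < t \<Longrightarrow> x \<in> {a..b} \<Longrightarrow>
      ((\<lambda>s. I x s) has_real_derivative (\<beta> x * S x t * I x t - \<gamma> x * I x t)) (at t)"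
begin

definition r :: "real \<Rightarrow> real" where "r x = \<gamma> x / \<beta> x"
definition St :: "real \<Rightarrow> real \<Rightarrow> real"
  where "St x t = dS * Sxx x t - \<beta> x * S x t * I x t + \<gamma> x * I x t"
definition It :: "real \<Rightarrow> real \<Rightarrow> real"
  where "It x t = \<beta> x * S x t * I x t - \<gamma> x * I x t"

lemma r_pos: "x \<in> {a..b} \<Longrightarrow> 0 < r x"
  using \<beta>_pos \<gamma>_pos by (simp add: r_def)

lemma r_cont: "continuous_on {a..b} r"
  unfolding r_def using \<beta>_pos by (intro continuous_intros \<beta>_cont \<gamma>_cont) force

lemma It_eq: "x \<in> {a..b} \<Longrightarrow> It x t = \<beta> x * I x t * (S x t - r x)"
  using \<beta>_pos[of x] by (simp add: It_def r_def field_simps)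

lemma St_eq: "St x t = dS * Sxx x t - It x t"
  by (simp add: St_def It_def)

lemma St_cont: "continuous_on ({a..b} \<times> {0<..}) (\<lambda>p. St (fst p) (snd p))"
  unfolding St_def
  by (intro continuous_intros S_cont I_cont Sxx_cont continuous_on_Times_fst \<beta>_cont \<gamma>_cont)

lemma It_cont: "continuous_on ({a..b} \<times> {0<..}) (\<lambda>p. It (fst p) (snd p))"
  unfolding It_def by (intro continuous_intros S_cont I_cont continuous_on_Times_fst \<beta>_cont \<gamma>_cont)

lemma continuous_on_slices:
  assumes "0 < t"
  shows "continuous_on {a..b} (\<lambda>x. S x t)" "continuous_on {a..b} (\<lambda>x. I x t)"
    "continuous_on {a..b} (\<lambda>x. Sx x t)" "continuous_on {a..b} (\<lambda>x. Sxx x t)"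
  using assms by (auto intro!: continuous_on_Times_slice[OF S_cont] continuous_on_Times_slice[OF I_cont]
      continuous_on_Times_slice[OF Sx_cont] continuous_on_Times_slice[OF Sxx_cont])

lemma S_t_deriv:
  assumes "x \<in> {a..b}" "0 < t"
  shows "((\<lambda>s. S x s) has_real_derivative St x t) (at t)"
proof (rule slice_has_real_derivative_closure[OF S_cont St_cont])
  show "x islimpt {a<..<b}"
    using assms(1) a_less_b by (metis closure_greaterThanLessThan islimpt_Icc limpt_of_closure)
qed (use assms S_t_deriv_interior in \<open>auto simp: St_def\<close>)

lemma I_t_deriv: "x \<in> {a..b} \<Longrightarrow> 0 < t \<Longrightarrow> ((\<lambda>s. I x s) has_real_derivative It x t) (at t)"
  unfolding It_def by (rule I_t_deriv_rhs)

lemma St_nonpos_at_max: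
  assumes "0 < t" "x \<in> {a..b}" and max: "\<And>y. y \<in> {a..b} \<Longrightarrow> S y t \<le> S x t"
    and "r x \<le> S x t"
  shows "St x t \<le> 0"
proof -
  have "Sxx x t \<le> 0"
    using second_deriv_nonpos_at_max_Neumann[OF a_less_b \<open>x \<in> {a..b}\<close> S_x_deriv Sx_x_deriv]
      Neumann max assms(1,2) by blast
  moreover have "0 \<le> It x t"
    unfolding It_eq[OF \<open>x \<in> {a..b}\<close>] using assms \<beta>_pos[of x] I_nonneg[of x t] by simp
  ultimately show ?thesis unfolding St_eq using dS_pos mult_nonneg_nonpos[of dS "Sxx x t"] by linarith
qed

lemma S_below_barrier:
  fixes t0 t1 :: real
  assumes K: "\<And>x. x \<in> {a..b} \<Longrightarrow> S x t0 \<le> K \<and> r x \<le> K" and "0 < t0" "0 < e"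
    and "x1 \<in> {a..b}" "t0 \<le> t1"
  shows "S x1 t1 < K + e * t1"
proof (rule ccontr)
  assume "\<not> S x1 t1 < K + e * t1"
  then have "K + e * t1 \<le> S x1 t1" by simp
  moreover have "continuous_on ({a..b} \<times> {t0..t1}) (\<lambda>p. S (fst p) (snd p))"
    using \<open>0 < t0\<close> by (intro continuous_on_subset[OF S_cont]) auto
  moreover have "continuous_on {t0..t1} (\<lambda>s. K + e * s)" by (intro continuous_intros)
  ultimately obtain \<tau> x\<tau> where "t0 \<le> \<tau>" "\<tau> \<le> t1" "x\<tau> \<in> {a..b}" and above: "K + e * \<tau> \<le> S x\<tau> \<tau>"
    and below: "\<And>y s. y \<in> {a..b} \<Longrightarrow> t0 \<le> s \<Longrightarrow> s < \<tau> \<Longrightarrow> S y s < K + e * s"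
    using first_time_above[OF compact_Icc _ _ \<open>x1 \<in> {a..b}\<close> \<open>t0 \<le> t1\<close>] by blast
  have "0 < e * t0" using \<open>0 < e\<close> \<open>0 < t0\<close> by simp
  then have "\<tau> \<noteq> t0" using K[OF \<open>x\<tau> \<in> {a..b}\<close>] above by auto
  then have "t0 < \<tau>" using \<open>t0 \<le> \<tau>\<close> by simp
  obtain xm where "xm \<in> {a..b}" and max: "\<And>y. y \<in> {a..b} \<Longrightarrow> S y \<tau> \<le> S xm \<tau>"
    using continuous_attains_sup[of "{a..b}" "\<lambda>x. S x \<tau>"] continuous_on_slices(1)[of \<tau>]
      a_less_b \<open>0 < t0\<close> \<open>t0 < \<tau>\<close> by auto
  have xm_above: "K + e * \<tau> \<le> S xm \<tau>" using above max[OF \<open>x\<tau> \<in> {a..b}\<close>] by simp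
  have "St xm \<tau> \<le> 0"
  proof (rule St_nonpos_at_max[OF _ \<open>xm \<in> {a..b}\<close> max])
    show "0 < \<tau>" using \<open>0 < t0\<close> \<open>t0 < \<tau>\<close> by simp
    show "r xm \<le> S xm \<tau>"
      using K[OF \<open>xm \<in> {a..b}\<close>] xm_above \<open>0 < e\<close> \<open>0 < \<tau>\<close> mult_pos_pos[of e \<tau>] by linarith
  qed
  \<comment> \<open>The barrier is crossed from below at \<open>\<tau>\<close>, so \<open>S xm\<close> grows at least at rate \<open>e\<close> there.\<close>
  then have "((\<lambda>s. S xm s - e * s) has_real_derivative St xm \<tau> - e) (at \<tau>)"
    using S_t_deriv[OF \<open>xm \<in> {a..b}\<close>] \<open>0 < t0\<close> \<open>t0 < \<tau>\<close> by (auto intro!: derivative_eq_intros)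
  from DERIV_neg_dec_left[OF this] \<open>St xm \<tau> \<le> 0\<close> \<open>0 < e\<close> obtain d where "0 < d"
    and d: "\<And>h. 0 < h \<Longrightarrow> h < d \<Longrightarrow> S xm \<tau> - e * \<tau> < S xm (\<tau> - h) - e * (\<tau> - h)"
    by auto
  define h where "h = min (d / 2) (\<tau> - t0)"
  have "0 < h" "h < d" "t0 \<le> \<tau> - h" using \<open>0 < d\<close> \<open>t0 < \<tau>\<close> by (auto simp: h_def)
  then show False
    using d[of h] below[OF \<open>xm \<in> {a..b}\<close>, of "\<tau> - h"] xm_above by (auto simp: algebra_simps)
qed

lemma S_le_max_principle:
  fixes t0 t :: real
  assumes "\<And>x. x \<in> {a..b} \<Longrightarrow> S x t0 \<le> K \<and> r x \<le> K" "0 < t0" "x \<in> {a..b}" "t0 \<le> t"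
  shows "S x t \<le> K"
proof (rule field_le_epsilon)
  fix e :: real assume "0 < e"
  then have "S x t < K + e / t * t" using assms by (intro S_below_barrier) auto
  then show "S x t \<le> K + e" using assms by simp
qed

lemma excess_bounded:
  obtains C :: real where "0 \<le> C" "\<And>x t. x \<in> {a..b} \<Longrightarrow> 1 \<le> t \<Longrightarrow> \<beta> x * (S x t - r x) \<le> C"
proof -
  obtain M1 where M1: "\<And>x. x \<in> {a..b} \<Longrightarrow> \<bar>S x 1\<bar> \<le> M1"
    using continuous_on_compact_bound[OF compact_Icc continuous_on_slices(1)[of 1]] by auto
  obtain M2 where M2: "\<And>x. x \<in> {a..b} \<Longrightarrow> \<bar>r x\<bar> \<le> M2"
    using continuous_on_compact_bound[OF compact_Icc r_cont] by auto
  obtain M3 where "0 \<le> M3" and M3: "\<And>x. x \<in> {a..b} \<Longrightarrow> \<bar>\<beta> x\<bar> \<le> M3"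
    using continuous_on_compact_bound[OF compact_Icc \<beta>_cont] by auto
  define K where "K = M1 + M2"
  have K: "S x 1 \<le> K \<and> r x \<le> K" "0 \<le> K" if "x \<in> {a..b}" for x
    using M1[OF that] M2[OF that] unfolding K_def by auto
  show ?thesis
  proof (rule that[of "M3 * K"])
    show "0 \<le> M3 * K" using K(2)[of a] a_less_b \<open>0 \<le> M3\<close> by simp
    fix x t :: real assume "x \<in> {a..b}" "1 \<le> t"
    then have "S x t - r x \<le> K" "0 < \<beta> x" "\<beta> x \<le> M3" "0 \<le> K"
      using S_le_max_principle[of 1 K x t] K r_pos[of x] \<beta>_pos[of x] M3[of x] by auto
    then have "\<beta> x * (S x t - r x) \<le> \<beta> x * K" by simp
    also have "\<dots> \<le> M3 * K" using \<open>\<beta> x \<le> M3\<close> \<open>0 \<le> K\<close> by (rule mult_right_mono)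
    finally show "\<beta> x * (S x t - r x) \<le> M3 * K" .
  qed
qed

definition lyapunov :: "real \<Rightarrow> real"
  where "lyapunov t = integral {a..b} (\<lambda>x. (S x t)\<^sup>2 / 2 + r x * I x t)"
definition grad_sq :: "real \<Rightarrow> real"
  where "grad_sq t = integral {a..b} (\<lambda>x. (Sx x t)\<^sup>2)"
definition reaction :: "real \<Rightarrow> real"
  where "reaction t = integral {a..b} (\<lambda>x. \<beta> x * (S x t - r x)\<^sup>2 * I x t)"
definition dissipation :: "real \<Rightarrow> real"
  where "dissipation t = dS * grad_sq t + reaction t"

lemma grad_sq_nonneg: "0 < t \<Longrightarrow> 0 \<le> grad_sq t"
  unfolding grad_sq_def
  by (intro integral_nonneg integrable_continuous_real continuous_intros continuous_on_slices) auto

lemma reaction_nonneg: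
  assumes "0 < t" shows "0 \<le> reaction t"
  unfolding reaction_def
proof (rule integral_nonneg)
  show "(\<lambda>x. \<beta> x * (S x t - r x)\<^sup>2 * I x t) integrable_on {a..b}"
    by (intro integrable_continuous_real continuous_intros continuous_on_slices assms \<beta>_cont r_cont)
qed (use assms \<beta>_pos I_nonneg in \<open>simp add: less_imp_le\<close>)

lemma lyapunov_nonneg:
  assumes "0 < t" shows "0 \<le> lyapunov t"
  unfolding lyapunov_def
proof (rule integral_nonneg)
  show "(\<lambda>x. (S x t)\<^sup>2 / 2 + r x * I x t) integrable_on {a..b}"
    by (intro integrable_continuous_real continuous_intros continuous_on_slices assms r_cont) auto
qed (use assms r_pos I_nonneg in \<open>simp add: less_imp_le\<close>)

lemma reaction_le_dissipation: "0 < t \<Longrightarrow> reaction t \<le> dissipation t"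
  unfolding dissipation_def using grad_sq_nonneg dS_pos by simp

lemma dissipation_nonneg: "0 < t \<Longrightarrow> 0 \<le> dissipation t"
  using reaction_nonneg reaction_le_dissipation by (metis order_trans)

lemma integral_Sx_mult:
  assumes "0 < t"
    and u_deriv: "\<And>x. x \<in> {a..b} \<Longrightarrow> (u has_real_derivative u' x) (at x within {a..b})"
    and "continuous_on {a..b} u" "continuous_on {a..b} u'"
  shows "integral {a..b} (\<lambda>x. Sx x t * u' x) = - integral {a..b} (\<lambda>x. Sxx x t * u x)"
  using integral_by_parts_vanishing_boundary[of a b "\<lambda>x. Sx x t"] a_less_b Neumann Sx_x_deriv u_deriv
    continuous_on_slices assms by auto

lemma lyapunov_density_deriv_integral:
  assumes "0 < t"
  shows "integral {a..b} (\<lambda>x. S x t * St x t + r x * It x t) = - dissipation t"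
proof -
  have "S x t * St x t + r x * It x t = dS * (S x t * Sxx x t) - \<beta> x * (S x t - r x)\<^sup>2 * I x t"
    if "x \<in> {a..b}" for x
    unfolding St_eq It_eq[OF that] by (simp add: algebra_simps power2_eq_square)
  then have "integral {a..b} (\<lambda>x. S x t * St x t + r x * It x t) =
      integral {a..b} (\<lambda>x. dS * (S x t * Sxx x t) - \<beta> x * (S x t - r x)\<^sup>2 * I x t)"
    by (rule integral_cong)
  also have "\<dots> = dS * integral {a..b} (\<lambda>x. S x t * Sxx x t) - reaction t"
  proof -
    have "(\<lambda>x. dS * (S x t * Sxx x t)) integrable_on {a..b}"
      "(\<lambda>x. \<beta> x * (S x t - r x)\<^sup>2 * I x t) integrable_on {a..b}"
      by (intro integrable_continuous_real continuous_intros continuous_on_slices assms \<beta>_cont r_cont)+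
    then show ?thesis unfolding reaction_def by (simp add: integral_diff)
  qed
  also have "integral {a..b} (\<lambda>x. S x t * Sxx x t) = - grad_sq t"
    using integral_Sx_mult[OF assms S_x_deriv[OF assms] continuous_on_slices(1,3)[OF assms]]
    by (simp add: grad_sq_def power2_eq_square mult.commute)
  finally show ?thesis by (simp add: dissipation_def)
qed

lemma lyapunov_deriv:
  assumes "0 < t"
  shows "(lyapunov has_real_derivative - dissipation t) (at t)"
proof -
  define f where "f s = (\<lambda>x. (S x s)\<^sup>2 / 2 + r x * I x s)" for s
  define f' where "f' s = (\<lambda>x. S x s * St x s + r x * It x s)" for s
  have "((\<lambda>s. integral (cbox a b) (f s)) has_field_derivative integral (cbox a b) (f' t))
      (at t within {0<..})"
  proof (rule leibniz_rule_field_derivative)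
    fix s x :: real assume "s \<in> {0<..}" "x \<in> cbox a b"
    then show "((\<lambda>s. f s x) has_field_derivative f' s x) (at s within {0<..})"
      unfolding f_def f'_def
      by (auto intro!: derivative_eq_intros has_field_derivative_at_within[OF S_t_deriv]
          has_field_derivative_at_within[OF I_t_deriv])
  next
    fix s :: real assume "s \<in> {0<..}"
    then have "0 < s" by simp
    then show "f s integrable_on cbox a b"
      unfolding f_def cbox_interval
      by (intro integrable_continuous_real continuous_intros continuous_on_slices r_cont) auto
  next
    have "continuous_on ({a..b} \<times> {0<..}) (\<lambda>p. f' (snd p) (fst p))"
      unfolding f'_def by (intro continuous_intros S_cont St_cont It_cont continuous_on_Times_fst r_cont)
    from continuous_on_Times_swap[OF this] show "continuous_on ({0<..} \<times> cbox a b) (\<lambda>(s, x). f' s x)"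
      by simp
  qed (use assms in auto)
  moreover have "at t within {0<..} = at t" using assms by (intro at_within_open) auto
  moreover have "lyapunov = (\<lambda>s. integral (cbox a b) (f s))"
    by (simp add: fun_eq_iff lyapunov_def f_def)
  ultimately show ?thesis using lyapunov_density_deriv_integral[OF assms] by (simp add: f'_def)
qed

lemma dissipation_cont: "continuous_on {0<..} dissipation"
proof -
  have "continuous_on ({a..b} \<times> {0<..}) (\<lambda>p. (Sx (fst p) (snd p))\<^sup>2)"
    "continuous_on ({a..b} \<times> {0<..})
      (\<lambda>p. \<beta> (fst p) * (S (fst p) (snd p) - r (fst p))\<^sup>2 * I (fst p) (snd p))"
    by (intro continuous_intros S_cont I_cont Sx_cont continuous_on_Times_fst \<beta>_cont r_cont)+
  from this[THEN continuous_on_Times_swap, unfolded interval_cbox, THEN integral_continuous_on_param]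
  have "continuous_on {0<..} (\<lambda>t. dS * grad_sq t + reaction t)"
    unfolding grad_sq_def reaction_def interval_cbox by (intro continuous_intros) simp_all
  then show ?thesis by (simp add: dissipation_def[abs_def])
qed

lemma grad_sq_increment_le:
  assumes "0 < t1" "0 < t2"
  shows "grad_sq t2 - grad_sq t1 \<le> - 2 * integral {a..b} (\<lambda>x. Sxx x t2 * (S x t2 - S x t1))"
proof -
  note cont = continuous_on_slices[OF assms(1)] continuous_on_slices[OF assms(2)]
  have "grad_sq t2 - grad_sq t1 = integral {a..b} (\<lambda>x. (Sx x t2)\<^sup>2 - (Sx x t1)\<^sup>2)"
    unfolding grad_sq_def by (intro integral_diff[symmetric] integrable_continuous_real continuous_intros cont)
  also have "\<dots> \<le> integral {a..b} (\<lambda>x. 2 * (Sx x t2 * (Sx x t2 - Sx x t1)))"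
  proof (rule integral_le)
    fix x
    have "0 \<le> (Sx x t2 - Sx x t1)\<^sup>2" by simp
    then show "(Sx x t2)\<^sup>2 - (Sx x t1)\<^sup>2 \<le> 2 * (Sx x t2 * (Sx x t2 - Sx x t1))"
      by (simp add: power2_eq_square algebra_simps)
  qed (intro integrable_continuous_real continuous_intros cont)+
  also have "\<dots> = 2 * integral {a..b} (\<lambda>x. Sx x t2 * (Sx x t2 - Sx x t1))"
    by (rule integral_mult_right)
  also have "integral {a..b} (\<lambda>x. Sx x t2 * (Sx x t2 - Sx x t1)) =
      - integral {a..b} (\<lambda>x. Sxx x t2 * (S x t2 - S x t1))"
    by (intro integral_Sx_mult[OF assms(2)] DERIV_diff S_x_deriv assms continuous_intros cont)
  finally show ?thesis by simp
qed

lemma density_increment_eq: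
  fixes t1 t2 :: real
  assumes x: "x \<in> {a..b}"
  defines "\<Delta> \<equiv> S x t2 - S x t1"
  shows "- 2 * dS * (Sxx x t2 * \<Delta>) + (\<beta> x * (S x t2 - r x)\<^sup>2 * I x t2 - \<beta> x * (S x t1 - r x)\<^sup>2 * I x t1)
    = - 2 * St x t2 * \<Delta> - \<beta> x * I x t2 * \<Delta>\<^sup>2 + \<beta> x * (S x t1 - r x)\<^sup>2 * (I x t2 - I x t1)"
  unfolding St_eq It_eq[OF x] \<Delta>_def power2_eq_square by (simp add: algebra_simps)

lemma weighted_It_le:
  assumes "x \<in> {a..b}" "0 < t" and It_near: "\<bar>It x \<xi> - It x t\<bar> \<le> \<eta>"
    and weight_bound: "\<beta> x * (S x t - r x)\<^sup>2 \<le> M"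
    and excess: "\<beta> x * (S x t - r x) \<le> C"
  shows "\<beta> x * (S x t - r x)\<^sup>2 * It x \<xi> \<le> C * (\<beta> x * (S x t - r x)\<^sup>2 * I x t) + M * \<eta>"
proof -
  define w where "w = \<beta> x * (S x t - r x)\<^sup>2"
  have "0 \<le> w" using \<beta>_pos[OF assms(1)] by (simp add: w_def)
  have "w * (It x \<xi> - It x t) \<le> w * \<eta>"
    using It_near \<open>0 \<le> w\<close> by (intro mult_left_mono) auto
  also have "\<dots> \<le> M * \<eta>"
    using weight_bound It_near by (intro mult_right_mono) (auto simp: w_def)
  finally have "w * It x \<xi> \<le> w * It x t + M * \<eta>" by (simp add: algebra_simps)
  moreover have "w * It x t \<le> C * (w * I x t)"
    \<comment> \<open>the only place where the bound \<open>C\<close> on \<open>\<beta> (S - r)\<close> from the maximum principle enters\<close>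
  proof -
    have "0 \<le> w * I x t" using \<open>0 \<le> w\<close> I_nonneg[OF assms(1,2)] by simp
    have "w * It x t = (\<beta> x * (S x t - r x)) * (w * I x t)"
      unfolding w_def It_eq[OF assms(1)] power2_eq_square by (simp add: algebra_simps)
    also have "\<dots> \<le> C * (w * I x t)" using mult_right_mono[OF excess \<open>0 \<le> w * I x t\<close>] .
    finally show ?thesis .
  qed
  ultimately show ?thesis unfolding w_def by linarith
qed

text \<open>By the mean value theorem both increments are \<open>h\<close> times time derivatives at nearby
  times, so the diffusion term is \<open>-2 h St\<^sup>2\<close> up to an error controlled by \<open>\<eta>\<close>.\<close>

lemma density_increment_bound:
  assumes "x \<in> {a..b}" "0 < t" "0 < h"
    and St_near: "\<And>s. s \<in> {t..t + h} \<Longrightarrow> \<bar>St x s - St x t\<bar> \<le> \<eta>"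
    and It_near: "\<And>s. s \<in> {t..t + h} \<Longrightarrow> \<bar>It x s - It x t\<bar> \<le> \<eta>"
    and St_bound: "\<And>s. s \<in> {t..t + h} \<Longrightarrow> \<bar>St x s\<bar> \<le> M"
    and weight_bound: "\<beta> x * (S x t - r x)\<^sup>2 \<le> M"
    and excess: "\<beta> x * (S x t - r x) \<le> C"
  shows "- 2 * dS * (Sxx x (t + h) * (S x (t + h) - S x t))
      + (\<beta> x * (S x (t + h) - r x)\<^sup>2 * I x (t + h) - \<beta> x * (S x t - r x)\<^sup>2 * I x t)
    \<le> h * (C * (\<beta> x * (S x t - r x)\<^sup>2 * I x t) + 5 * M * \<eta>)"
proof -
  have "t < t + h" using \<open>0 < h\<close> by simp
  obtain \<xi> where \<xi>: "t < \<xi>" "\<xi> < t + h" and S_incr: "S x (t + h) - S x t = h * St x \<xi>"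
    using MVT2[OF \<open>t < t + h\<close>, of "\<lambda>s. S x s" "St x"] S_t_deriv[OF assms(1)] \<open>0 < t\<close> by force
  obtain \<xi>' where \<xi>': "t < \<xi>'" "\<xi>' < t + h" and I_incr: "I x (t + h) - I x t = h * It x \<xi>'"
    using MVT2[OF \<open>t < t + h\<close>, of "\<lambda>s. I x s" "It x"] I_t_deriv[OF assms(1)] \<open>0 < t\<close> by force
  have "- (St x (t + h) * St x \<xi>) \<le> 2 * M * \<eta>"
    using \<xi> \<open>0 < h\<close> by (intro neg_mult_le_of_near[where c = "St x t"] St_near St_bound) auto
  then have "2 * h * (- (St x (t + h) * St x \<xi>)) \<le> 2 * h * (2 * M * \<eta>)"
    using \<open>0 < h\<close> by (intro mult_left_mono) auto
  then have diffusion: "- 2 * St x (t + h) * (h * St x \<xi>) \<le> h * (4 * M * \<eta>)"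
    by (simp add: algebra_simps)
  have "h * (\<beta> x * (S x t - r x)\<^sup>2 * It x \<xi>') \<le> h * (C * (\<beta> x * (S x t - r x)\<^sup>2 * I x t) + M * \<eta>)"
    using weighted_It_le[OF assms(1,2) It_near weight_bound excess] \<xi>' \<open>0 < h\<close>
    by (intro mult_left_mono) auto
  moreover have "0 \<le> \<beta> x * I x (t + h) * (h * St x \<xi>)\<^sup>2"
    using \<beta>_pos[OF assms(1)] I_nonneg[OF assms(1), of "t + h"] assms(2,3) by simp
  ultimately show ?thesis using diffusion
    unfolding density_increment_eq[OF assms(1)] unfolding S_incr I_incr
    by (simp add: algebra_simps)
qed

lemma dissipation_increment_le:
  assumes "0 < t1" "0 < t2"
  shows "dissipation t2 - dissipation t1 \<le> integral {a..b} (\<lambda>x.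
      - 2 * dS * (Sxx x t2 * (S x t2 - S x t1))
      + (\<beta> x * (S x t2 - r x)\<^sup>2 * I x t2 - \<beta> x * (S x t1 - r x)\<^sup>2 * I x t1))"
proof -
  note cont = continuous_on_slices[OF assms(1)] continuous_on_slices[OF assms(2)]
  have diffusion_integrable: "(\<lambda>x. - 2 * dS * (Sxx x t2 * (S x t2 - S x t1))) integrable_on {a..b}"
    and reaction_integrable: "(\<lambda>x. \<beta> x * (S x t2 - r x)\<^sup>2 * I x t2) integrable_on {a..b}"
      "(\<lambda>x. \<beta> x * (S x t1 - r x)\<^sup>2 * I x t1) integrable_on {a..b}"
    by (intro integrable_continuous_real continuous_intros cont \<beta>_cont r_cont)+
  have "integral {a..b} (\<lambda>x. - 2 * dS * (Sxx x t2 * (S x t2 - S x t1))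
      + (\<beta> x * (S x t2 - r x)\<^sup>2 * I x t2 - \<beta> x * (S x t1 - r x)\<^sup>2 * I x t1))
    = dS * (- 2 * integral {a..b} (\<lambda>x. Sxx x t2 * (S x t2 - S x t1))) + (reaction t2 - reaction t1)"
    unfolding reaction_def integral_add[OF diffusion_integrable integrable_diff[OF reaction_integrable]]
      integral_diff[OF reaction_integrable] integral_mult_right
    by simp
  moreover have "dS * (grad_sq t2 - grad_sq t1) \<le>
      dS * (- 2 * integral {a..b} (\<lambda>x. Sxx x t2 * (S x t2 - S x t1)))"
    using grad_sq_increment_le[OF assms] dS_pos by (intro mult_left_mono) auto
  ultimately show ?thesis unfolding dissipation_def by (simp add: algebra_simps)
qed

lemma dissipation_increment_bound:
  assumes "0 < t" "0 < h"
    and St_near: "\<And>x s. x \<in> {a..b} \<Longrightarrow> s \<in> {t..t + h} \<Longrightarrow> \<bar>St x s - St x t\<bar> \<le> \<eta>"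
    and It_near: "\<And>x s. x \<in> {a..b} \<Longrightarrow> s \<in> {t..t + h} \<Longrightarrow> \<bar>It x s - It x t\<bar> \<le> \<eta>"
    and St_bound: "\<And>x s. x \<in> {a..b} \<Longrightarrow> s \<in> {t..t + h} \<Longrightarrow> \<bar>St x s\<bar> \<le> M"
    and weight_bound: "\<And>x. x \<in> {a..b} \<Longrightarrow> \<beta> x * (S x t - r x)\<^sup>2 \<le> M"
    and excess: "\<And>x. x \<in> {a..b} \<Longrightarrow> \<beta> x * (S x t - r x) \<le> C"
  shows "dissipation (t + h) - dissipation t \<le> h * (C * reaction t + 5 * M * \<eta> * (b - a))"
proof -
  have "0 < t + h" using assms(1,2) by simp
  have "dissipation (t + h) - dissipation t \<le> integral {a..b} (\<lambda>x.
      - 2 * dS * (Sxx x (t + h) * (S x (t + h) - S x t))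
      + (\<beta> x * (S x (t + h) - r x)\<^sup>2 * I x (t + h) - \<beta> x * (S x t - r x)\<^sup>2 * I x t))"
    by (rule dissipation_increment_le[OF \<open>0 < t\<close> \<open>0 < t + h\<close>])
  also have "\<dots> \<le> integral {a..b} (\<lambda>x. h * (C * (\<beta> x * (S x t - r x)\<^sup>2 * I x t) + 5 * M * \<eta>))"
  proof (rule integral_le)
    show "(\<lambda>x. h * (C * (\<beta> x * (S x t - r x)\<^sup>2 * I x t) + 5 * M * \<eta>)) integrable_on {a..b}"
      by (intro integrable_continuous_real continuous_intros continuous_on_slices \<open>0 < t\<close> \<beta>_cont r_cont)
    show "(\<lambda>x. - 2 * dS * (Sxx x (t + h) * (S x (t + h) - S x t))
        + (\<beta> x * (S x (t + h) - r x)\<^sup>2 * I x (t + h) - \<beta> x * (S x t - r x)\<^sup>2 * I x t))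
        integrable_on {a..b}"
      by (intro integrable_continuous_real continuous_intros continuous_on_slices \<open>0 < t\<close> \<open>0 < t + h\<close>
          \<beta>_cont r_cont)
    fix x assume x: "x \<in> {a..b}"
    show "- 2 * dS * (Sxx x (t + h) * (S x (t + h) - S x t))
        + (\<beta> x * (S x (t + h) - r x)\<^sup>2 * I x (t + h) - \<beta> x * (S x t - r x)\<^sup>2 * I x t)
      \<le> h * (C * (\<beta> x * (S x t - r x)\<^sup>2 * I x t) + 5 * M * \<eta>)"
      by (rule density_increment_bound[OF x \<open>0 < t\<close> \<open>0 < h\<close> St_near[OF x] It_near[OF x]
          St_bound[OF x] weight_bound[OF x] excess[OF x]])
  qed
  also have "\<dots> = h * (C * reaction t + 5 * M * \<eta> * (b - a))"
  proof -
    have integrable: "(\<lambda>x. C * (\<beta> x * (S x t - r x)\<^sup>2 * I x t)) integrable_on {a..b}"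
      by (intro integrable_continuous_real continuous_intros continuous_on_slices \<open>0 < t\<close> \<beta>_cont r_cont)
    show ?thesis
      unfolding integral_mult_right integral_add[OF integrable integrable_const_ivl]
      using a_less_b by (simp add: reaction_def)
  qed
  finally show ?thesis .
qed

lemma dissipation_right_increment:
  assumes "0 < t" "0 < e" and excess: "\<And>x. x \<in> {a..b} \<Longrightarrow> \<beta> x * (S x t - r x) \<le> C"
  shows "\<exists>\<delta>>0. \<forall>h. 0 < h \<and> h < \<delta> \<longrightarrow> dissipation (t + h) \<le> dissipation t + h * (C * reaction t + e)"
proof -
  have "{a..b} \<times> {t..t + 1} \<subseteq> {a..b} \<times> {0<..}" using \<open>0 < t\<close> by auto
  then have St_cont': "continuous_on ({a..b} \<times> {t..t + 1}) (\<lambda>p. St (fst p) (snd p))"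
    and It_cont': "continuous_on ({a..b} \<times> {t..t + 1}) (\<lambda>p. It (fst p) (snd p))"
    using continuous_on_subset St_cont It_cont by blast+
  obtain M1 where M1: "\<And>p. p \<in> {a..b} \<times> {t..t + 1} \<Longrightarrow> norm (St (fst p) (snd p)) \<le> M1"
    using continuous_on_compact_bound[OF compact_Times[OF compact_Icc compact_Icc] St_cont'] by blast
  have "continuous_on {a..b} (\<lambda>x. \<beta> x * (S x t - r x)\<^sup>2)"
    by (intro continuous_intros continuous_on_slices \<open>0 < t\<close> \<beta>_cont r_cont)
  then obtain M2 where M2: "\<And>x. x \<in> {a..b} \<Longrightarrow> norm (\<beta> x * (S x t - r x)\<^sup>2) \<le> M2"
    using continuous_on_compact_bound[OF compact_Icc] by blast
  define M where "M = max 0 (max M1 M2)"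
  define \<eta> where "\<eta> = e / ((b - a) * (5 * M + 1))"
  have "0 \<le> M" by (simp add: M_def)
  then have "0 < \<eta>" using \<open>0 < e\<close> a_less_b by (simp add: \<eta>_def)
  have "5 * M * \<eta> * (b - a) \<le> e"
  proof -
    have "(5 * M + 1) * \<eta> * (b - a) = e" using a_less_b \<open>0 \<le> M\<close> by (simp add: \<eta>_def)
    moreover have "0 \<le> \<eta> * (b - a)" using \<open>0 < \<eta>\<close> a_less_b by simp
    ultimately show ?thesis by (simp add: algebra_simps)
  qed
  obtain \<delta>1 where "0 < \<delta>1" "\<delta>1 \<le> t + 1 - t"
    and \<delta>1: "\<And>x s. x \<in> {a..b} \<Longrightarrow> s \<in> {t..t + \<delta>1} \<Longrightarrow> \<bar>St x s - St x t\<bar> < \<eta>"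
    using uniformly_close_in_time[OF St_cont' compact_Icc less_add_one \<open>0 < \<eta>\<close>] by metis
  obtain \<delta>2 where "0 < \<delta>2"
    and \<delta>2: "\<And>x s. x \<in> {a..b} \<Longrightarrow> s \<in> {t..t + \<delta>2} \<Longrightarrow> \<bar>It x s - It x t\<bar> < \<eta>"
    using uniformly_close_in_time[OF It_cont' compact_Icc less_add_one \<open>0 < \<eta>\<close>] by metis
  show ?thesis
  proof (intro exI[of _ "min \<delta>1 \<delta>2"] conjI allI impI)
    fix h assume h: "0 < h \<and> h < min \<delta>1 \<delta>2"
    have "dissipation (t + h) - dissipation t \<le> h * (C * reaction t + 5 * M * \<eta> * (b - a))"
    proof (rule dissipation_increment_bound[OF \<open>0 < t\<close>])
      show "0 < h" using h by simp
      fix x s assume x: "x \<in> {a..b}" and "s \<in> {t..t + h}"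
      then have s: "s \<in> {t..t + \<delta>1}" "s \<in> {t..t + \<delta>2}" "s \<in> {t..t + 1}"
        using h \<open>\<delta>1 \<le> t + 1 - t\<close> by auto
      show "\<bar>St x s - St x t\<bar> \<le> \<eta>" using \<delta>1[OF x s(1)] by simp
      show "\<bar>It x s - It x t\<bar> \<le> \<eta>" using \<delta>2[OF x s(2)] by simp
      show "\<bar>St x s\<bar> \<le> M" using M1[of "(x, s)"] x s(3) by (simp add: M_def)
    next
      fix x assume x: "x \<in> {a..b}"
      show "\<beta> x * (S x t - r x)\<^sup>2 \<le> M" using M2[OF x] by (simp add: M_def)
      show "\<beta> x * (S x t - r x) \<le> C" by (rule excess[OF x])
    qed
    also have "\<dots> \<le> h * (C * reaction t + e)"
      using \<open>5 * M * \<eta> * (b - a) \<le> e\<close> h by (intro mult_left_mono) auto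
    finally show "dissipation (t + h) \<le> dissipation t + h * (C * reaction t + e)" by simp
  qed (use \<open>0 < \<delta>1\<close> \<open>0 < \<delta>2\<close> in simp)
qed

lemma dissipation_tendsto_zero: "(dissipation \<longlongrightarrow> 0) at_top"
proof -
  obtain C where "0 \<le> C" and C: "\<And>x t. x \<in> {a..b} \<Longrightarrow> 1 \<le> t \<Longrightarrow> \<beta> x * (S x t - r x) \<le> C"
    using excess_bounded by blast
  show ?thesis
  proof (rule Lyapunov_dissipation_tendsto_zero[of 1 lyapunov dissipation 0 C])
    fix t e :: real assume "1 \<le> t" "0 < e"
    then obtain \<delta> where "0 < \<delta>"
      and \<delta>: "\<And>h. 0 < h \<Longrightarrow> h < \<delta> \<Longrightarrow> dissipation (t + h) \<le> dissipation t + h * (C * reaction t + e)"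
      using dissipation_right_increment[of t e C] C by auto
    have "dissipation (t + h) \<le> dissipation t + h * (C * dissipation t + e)"
      if "0 < h" "h < \<delta>" for h
    proof -
      have "C * reaction t \<le> C * dissipation t"
        using reaction_le_dissipation[of t] \<open>1 \<le> t\<close> \<open>0 \<le> C\<close> by (simp add: mult_left_mono)
      then have "h * (C * reaction t + e) \<le> h * (C * dissipation t + e)"
        using \<open>0 < h\<close> by simp
      then show ?thesis using \<delta>[OF that] by linarith
    qed
    then show "\<exists>\<delta>>0. \<forall>h. 0 < h \<and> h < \<delta> \<longrightarrow> dissipation (t + h) \<le> dissipation t + h * (C * dissipation t + e)"
      using \<open>0 < \<delta>\<close> by blast
  next
    show "continuous_on {1..} dissipation"
      by (rule continuous_on_subset[OF dissipation_cont]) auto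
  qed (use lyapunov_deriv lyapunov_nonneg dissipation_nonneg \<open>0 \<le> C\<close> in auto)
qed

lemma grad_sq_tendsto_zero: "(grad_sq \<longlongrightarrow> 0) at_top"
proof (rule tendsto_sandwich[of "\<lambda>_. 0" _ _ "\<lambda>t. dissipation t / dS"])
  show "\<forall>\<^sub>F t in at_top. 0 \<le> grad_sq t"
    using eventually_gt_at_top[of 0] by eventually_elim (rule grad_sq_nonneg)
  show "\<forall>\<^sub>F t in at_top. grad_sq t \<le> dissipation t / dS"
    using eventually_gt_at_top[of 0]
    by eventually_elim (use reaction_nonneg dS_pos in \<open>simp add: dissipation_def field_simps\<close>)
  show "((\<lambda>t. dissipation t / dS) \<longlongrightarrow> 0) at_top"
    using tendsto_divide[OF dissipation_tendsto_zero tendsto_const[of dS]] dS_pos by simp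
qed simp

lemma reaction_tendsto_zero: "(reaction \<longlongrightarrow> 0) at_top"
proof (rule tendsto_sandwich[of "\<lambda>_. 0" _ _ dissipation])
  show "\<forall>\<^sub>F t in at_top. 0 \<le> reaction t"
    using eventually_gt_at_top[of 0] by eventually_elim (rule reaction_nonneg)
  show "\<forall>\<^sub>F t in at_top. reaction t \<le> dissipation t"
    using eventually_gt_at_top[of 0] by eventually_elim (rule reaction_le_dissipation)
qed (simp_all add: dissipation_tendsto_zero)

lemma grad_sq_eq_integral_deriv:
  assumes "0 < t"
  shows "grad_sq t = integral {a<..<b} (\<lambda>x. (deriv (\<lambda>y. S y t) x)\<^sup>2)"
proof -
  have "deriv (\<lambda>y. S y t) x = Sx x t" if "x \<in> {a<..<b}" for x
  proof (rule DERIV_imp_deriv)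
    have "at x within {a..b} = at x" using that by (intro at_within_Icc_at) auto
    then show "((\<lambda>y. S y t) has_real_derivative Sx x t) (at x)"
      using S_x_deriv[OF assms, of x] that by simp
  qed
  then show ?thesis
    unfolding grad_sq_def integral_open_interval_real by (intro integral_cong) simp
qed

lemma grad_L2_norm_tendsto_zero:
  "((\<lambda>t. sqrt (integral {a<..<b} (\<lambda>x. (deriv (\<lambda>y. S y t) x)\<^sup>2))) \<longlongrightarrow> 0) at_top"
proof (rule Lim_transform_eventually)
  show "((\<lambda>t. sqrt (grad_sq t)) \<longlongrightarrow> 0) at_top"
    using tendsto_real_sqrt[OF grad_sq_tendsto_zero] by simp
  show "\<forall>\<^sub>F t in at_top. sqrt (grad_sq t) = sqrt (integral {a<..<b} (\<lambda>x. (deriv (\<lambda>y. S y t) x)\<^sup>2))"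
    using eventually_gt_at_top[of 0] by eventually_elim (simp add: grad_sq_eq_integral_deriv)
qed

lemma reaction_integral_tendsto_zero:
  "((\<lambda>t. integral {a<..<b} (\<lambda>x. \<beta> x * (S x t - \<gamma> x / \<beta> x)\<^sup>2 * I x t)) \<longlongrightarrow> 0) at_top"
  using reaction_tendsto_zero by (simp add: reaction_def[abs_def] r_def integral_open_interval_real)

end

lemma SIS_solution_imp_sis_system:
  assumes "a < b" "0 < dS" "continuous_on {a..b} \<beta>" "continuous_on {a..b} \<gamma>"
    and "\<forall>x\<in>{a..b}. \<beta> x > 0" "\<forall>x\<in>{a..b}. \<gamma> x > 0"
    and sol: "SIS_solution a b dS \<beta> \<gamma> S0 I0 S I"
  obtains Sx Sxx where "sis_system a b dS \<beta> \<gamma> S I Sx Sxx"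
proof -
  from sol obtain Sx Sxx St where
    Sx_cont: "continuous_on ({a..b} \<times> {0<..}) (\<lambda>(x, t). Sx x t)" and
    Sxx_cont: "continuous_on ({a..b} \<times> {0<..}) (\<lambda>(x, t). Sxx x t)" and
    x_derivs: "\<forall>t>0. \<forall>x\<in>{a..b}.
      ((\<lambda>y. S y t) has_real_derivative Sx x t) (at x within {a..b}) \<and>
      ((\<lambda>y. Sx y t) has_real_derivative Sxx x t) (at x within {a..b})" and
    S_t_deriv: "\<forall>t>0. \<forall>x\<in>{a<..<b}. ((\<lambda>s. S x s) has_real_derivative St x t) (at t) \<and>
      St x t = dS * Sxx x t - \<beta> x * S x t * I x t + \<gamma> x * I x t" and
    Neumann: "\<forall>t>0. Sx a t = 0 \<and> Sx b t = 0"
    unfolding SIS_solution_def by blast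
  have S_cont: "continuous_on ({a..b} \<times> {0..}) (\<lambda>(x, t). S x t)"
    and I_cont: "continuous_on ({a..b} \<times> {0..}) (\<lambda>(x, t). I x t)"
    and nonneg: "\<forall>x\<in>{a..b}. \<forall>t\<ge>0. S x t \<ge> 0 \<and> I x t \<ge> 0"
    and I_t_deriv: "\<forall>t>0. \<forall>x\<in>{a..b}.
      ((\<lambda>s. I x s) has_real_derivative (\<beta> x * S x t * I x t - \<gamma> x * I x t)) (at t)"
    using sol unfolding SIS_solution_def by blast+
  have sub: "{a..b} \<times> {0<..} \<subseteq> {a..b} \<times> {0::real..}" by auto
  have "sis_system a b dS \<beta> \<gamma> S I Sx Sxx"
  proof
    show "continuous_on ({a..b} \<times> {0<..}) (\<lambda>p. S (fst p) (snd p))"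
      "continuous_on ({a..b} \<times> {0<..}) (\<lambda>p. I (fst p) (snd p))"
      using continuous_on_subset[OF S_cont sub] continuous_on_subset[OF I_cont sub]
      by (simp_all add: case_prod_beta)
    show "continuous_on ({a..b} \<times> {0<..}) (\<lambda>p. Sx (fst p) (snd p))"
      "continuous_on ({a..b} \<times> {0<..}) (\<lambda>p. Sxx (fst p) (snd p))"
      using Sx_cont Sxx_cont by (simp_all add: case_prod_beta)
    fix x t :: real assume "0 < t" "x \<in> {a<..<b}"
    then have "((\<lambda>s. S x s) has_real_derivative St x t) (at t)"
      and "St x t = dS * Sxx x t - \<beta> x * S x t * I x t + \<gamma> x * I x t"
      using S_t_deriv by blast+
    then show "((\<lambda>s. S x s) has_real_derivative
        dS * Sxx x t - \<beta> x * S x t * I x t + \<gamma> x * I x t) (at t)"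
      by simp
  next
    show "\<And>x t. x \<in> {a..b} \<Longrightarrow> 0 < t \<Longrightarrow> 0 \<le> I x t" using nonneg by simp
    show "\<And>x t. 0 < t \<Longrightarrow> x \<in> {a..b} \<Longrightarrow>
        ((\<lambda>y. S y t) has_real_derivative Sx x t) (at x within {a..b})"
      "\<And>x t. 0 < t \<Longrightarrow> x \<in> {a..b} \<Longrightarrow>
        ((\<lambda>y. Sx y t) has_real_derivative Sxx x t) (at x within {a..b})"
      using x_derivs by blast+
    show "\<And>t. 0 < t \<Longrightarrow> Sx a t = 0 \<and> Sx b t = 0" using Neumann by blast
    show "\<And>x t. 0 < t \<Longrightarrow> x \<in> {a..b} \<Longrightarrow>
        ((\<lambda>s. I x s) has_real_derivative \<beta> x * S x t * I x t - \<gamma> x * I x t) (at t)"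
      using I_t_deriv by blast
  qed (use assms(1-6) in auto)
  then show ?thesis by (rule that)
qed

theorem lemma3p10:
  fixes a b dS N :: real
    and \<beta> \<gamma> S0 I0 :: "real \<Rightarrow> real"
    and S I :: "real \<Rightarrow> real \<Rightarrow> real"
  assumes "a < b"
    and "hoelder_cont_on {a..b} \<beta>" "hoelder_cont_on {a..b} \<gamma>"
    and "\<forall>x\<in>{a..b}. \<beta> x > 0" "\<forall>x\<in>{a..b}. \<gamma> x > 0"
    and "continuous_on {a..b} S0" "continuous_on {a..b} I0"
    and "\<forall>x\<in>{a..b}. S0 x \<ge> 0 \<and> I0 x \<ge> 0"
    and "\<exists>x\<in>{a..b}. I0 x \<noteq> 0"
    and "integral {a<..<b} (\<lambda>x. S0 x + I0 x) = N" and "N > 0"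
    and "dS > 0"
    and "SIS_solution a b dS \<beta> \<gamma> S0 I0 S I"
  shows "((\<lambda>t. sqrt (integral {a<..<b} (\<lambda>x. (deriv (\<lambda>y. S y t) x)\<^sup>2))) \<longlongrightarrow> 0) at_top \<and>
         ((\<lambda>t. integral {a<..<b} (\<lambda>x. \<beta> x * (S x t - \<gamma> x / \<beta> x)\<^sup>2 * I x t)) \<longlongrightarrow> 0) at_top"
proof -
  \<comment> \<open>The hypotheses on the initial data only matter for the existence of the solution.\<close>
  obtain Sx Sxx where "sis_system a b dS \<beta> \<gamma> S I Sx Sxx"
    using SIS_solution_imp_sis_system[OF \<open>a < b\<close> \<open>dS > 0\<close>
        hoelder_cont_on_imp_continuous_on[OF assms(2)] hoelder_cont_on_imp_continuous_on[OF assms(3)]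
        assms(4,5,13)] .
  then interpret sis_system a b dS \<beta> \<gamma> S I Sx Sxx .
  show ?thesis using grad_L2_norm_tendsto_zero reaction_integral_tendsto_zero ..
qed

end
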